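(* Let $(\mathcal S,\mathcal A,P,r)$ be a weakly communicating MDP and let $(g^\star,h^\star)$ be a solution of the modified Bellman equations. Let $f:\mathbb R^n\to\mathbb R$ be continuous with $f(x+c\mathbf 1)=f(x)+c$ for all $x,c$. Let $h^0\in\mathbb R^n$, $\lambda_k=\frac{2}{k+2}$, and for $k\ge1$ \[h^k=\lambda_{k-1}h^0+(1-\lambda_{k-1})\big(Th^{k-1}-f(h^{k-1})\mathbf 1\big)\] (Anchored Relative Value Iteration), and let $\pi_k$ be a greedy policy, $T^{\pi_k}h^k=Th^k$. Then for $k\ge1$, \[\|g^\star-g^{\pi_k}\|_\infty\le\|Th^k-h^k-g^\star\|_\infty\le\frac{8}{k+1}\|h^0-h^\star\|_\infty.\] Furthermore, if the MDP is unichain, then $h^k\to h^\infty$ and $f(h^k)\mathbf 1\to g^\star$ for some solution $(g^\star,h^\infty)$ of the modified Bellman equations.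
   Context: An MDP $(\mathcal S,\mathcal A,P,r)$ has finite state space $\mathcal S$ ($|\mathcal S|=n$, functions identified with $\mathbb R^n$), finite action space, transition probabilities $P(s'\mid s,a)$ and bounded reward $r$. For a policy $\pi$: $r^\pi(s)=\sum_a\pi(a\mid s)r(s,a)$, $\mathcal P^\pi(s,s')=\sum_a\pi(a\mid s)P(s'\mid s,a)$, $g^\pi(s)=\liminf_{T\to\infty}\frac1T\mathbb E_\pi[\sum_{t=0}^{T-1}r(s_t,a_t)\mid s_0=s]$, $g^\star=\max_\pi g^\pi$. $T^\pi V=r^\pi+\mathcal P^\pi V$, $(TV)(s)=\max_a\{r(s,a)+\sum_{s'}P(s'\mid s,a)V(s')\}$, $\mathbf 1$ the all-ones vector. A pair $(g,h)$ solves the modified Bellman equations if $\max_a\sum_{s'}P(s'\mid s,a)g(s')=g(s)$ and $\max_a\{r(s,a)+\sum_{s'}P(s'\mid s,a)h(s')\}=h(s)+g(s)$ for all $s$, with some policy attaining both maxima simultaneously; the first component of any solution equals $g^\star$. Weakly communicating: there is a closed set of states each accessible from every other in it under some deterministic policy, plus a possibly empty set transient under every policy. Unichain: every deterministic policy induces a chain with a single irreducible recurrent class plus possibly transient states. *)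

theory Defs
  imports "HOL-Analysis.Analysis"
begin

definition mdp :: "('s::finite \<Rightarrow> 'a::finite \<Rightarrow> 's \<Rightarrow> real) \<Rightarrow> bool" where
  "mdp P \<longleftrightarrow> (\<forall>s a s'. P s a s' \<ge> 0) \<and> (\<forall>s a. (\<Sum>s'\<in>UNIV. P s a s') = 1)"

text \<open>Stationary (possibly randomized) Markov policy: \<pi> s a = probability of action a in state s.\<close>
definition policy :: "('s::finite \<Rightarrow> 'a::finite \<Rightarrow> real) \<Rightarrow> bool" where
  "policy \<pi> \<longleftrightarrow> (\<forall>s a. \<pi> s a \<ge> 0) \<and> (\<forall>s. (\<Sum>a\<in>UNIV. \<pi> s a) = 1)"

definition r_pol :: "('s::finite \<Rightarrow> 'a::finite \<Rightarrow> real) \<Rightarrow> ('s \<Rightarrow> 'a \<Rightarrow> real) \<Rightarrow> 's \<Rightarrow> real" where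
  "r_pol r \<pi> s = (\<Sum>a\<in>UNIV. \<pi> s a * r s a)"

definition P_pol :: "('s::finite \<Rightarrow> 'a::finite \<Rightarrow> 's \<Rightarrow> real) \<Rightarrow> ('s \<Rightarrow> 'a \<Rightarrow> real) \<Rightarrow> 's \<Rightarrow> 's \<Rightarrow> real" where
  "P_pol P \<pi> s s' = (\<Sum>a\<in>UNIV. \<pi> s a * P s a s')"

fun state_dist :: "('s::finite \<Rightarrow> 'a::finite \<Rightarrow> 's \<Rightarrow> real) \<Rightarrow> ('s \<Rightarrow> 'a \<Rightarrow> real) \<Rightarrow> 's \<Rightarrow> nat \<Rightarrow> 's \<Rightarrow> real" where
  "state_dist P \<pi> s0 0 s = (if s = s0 then 1 else 0)"
| "state_dist P \<pi> s0 (Suc t) s = (\<Sum>x\<in>UNIV. state_dist P \<pi> s0 t x * P_pol P \<pi> x s)"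

definition exp_reward :: "('s::finite \<Rightarrow> 'a::finite \<Rightarrow> 's \<Rightarrow> real) \<Rightarrow> ('s \<Rightarrow> 'a \<Rightarrow> real) \<Rightarrow> ('s \<Rightarrow> 'a \<Rightarrow> real) \<Rightarrow> 's \<Rightarrow> nat \<Rightarrow> real" where
  "exp_reward P r \<pi> s0 t = (\<Sum>x\<in>UNIV. state_dist P \<pi> s0 t x * r_pol r \<pi> x)"

text \<open>Average-reward gain g^\<pi>(s) = liminf_T (1/T) E_pi[sum_{t<T} r(s_t,a_t) | s_0 = s]
  (the sequence is bounded, so the extended-real liminf is finite).\<close>
definition gain :: "('s::finite \<Rightarrow> 'a::finite \<Rightarrow> 's \<Rightarrow> real) \<Rightarrow> ('s \<Rightarrow> 'a \<Rightarrow> real) \<Rightarrow> ('s \<Rightarrow> 'a \<Rightarrow> real) \<Rightarrow> real^'s" where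
  "gain P r \<pi> = (\<chi> s. real_of_ereal
      (liminf (\<lambda>T::nat. ereal ((1 / real T) * (\<Sum>t<T. exp_reward P r \<pi> s t)))))"

definition bellman :: "('s::finite \<Rightarrow> 'a::finite \<Rightarrow> 's \<Rightarrow> real) \<Rightarrow> ('s \<Rightarrow> 'a \<Rightarrow> real) \<Rightarrow> real^'s \<Rightarrow> real^'s" where
  "bellman P r V = (\<chi> s. Max (range (\<lambda>a. r s a + (\<Sum>s'\<in>UNIV. P s a s' * V $ s'))))"

definition bellman_pol :: "('s::finite \<Rightarrow> 'a::finite \<Rightarrow> 's \<Rightarrow> real) \<Rightarrow> ('s \<Rightarrow> 'a \<Rightarrow> real) \<Rightarrow> ('s \<Rightarrow> 'a \<Rightarrow> real) \<Rightarrow> real^'s \<Rightarrow> real^'s" where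
  "bellman_pol P r \<pi> V = (\<chi> s. r_pol r \<pi> s + (\<Sum>s'\<in>UNIV. P_pol P \<pi> s s' * V $ s'))"

text \<open>Modified Bellman equations; the simultaneous maximizer is a deterministic policy d.\<close>
definition mod_bellman :: "('s::finite \<Rightarrow> 'a::finite \<Rightarrow> 's \<Rightarrow> real) \<Rightarrow> ('s \<Rightarrow> 'a \<Rightarrow> real) \<Rightarrow> real^'s \<Rightarrow> real^'s \<Rightarrow> bool" where
  "mod_bellman P r g h \<longleftrightarrow>
     (\<forall>s. Max (range (\<lambda>a. \<Sum>s'\<in>UNIV. P s a s' * g $ s')) = g $ s) \<and>
     (\<forall>s. Max (range (\<lambda>a. r s a + (\<Sum>s'\<in>UNIV. P s a s' * h $ s'))) = h $ s + g $ s) \<and>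
     (\<exists>d::'s \<Rightarrow> 'a. \<forall>s.
        (\<Sum>s'\<in>UNIV. P s (d s) s' * g $ s') = g $ s \<and>
        r s (d s) + (\<Sum>s'\<in>UNIV. P s (d s) s' * h $ s') = h $ s + g $ s)"

definition det_pol :: "('s \<Rightarrow> 'a) \<Rightarrow> 's \<Rightarrow> 'a \<Rightarrow> real" where
  "det_pol d s a = (if a = d s then 1 else 0)"

definition edges :: "('s::finite \<Rightarrow> 'a::finite \<Rightarrow> 's \<Rightarrow> real) \<Rightarrow> ('s \<Rightarrow> 'a \<Rightarrow> real) \<Rightarrow> ('s \<times> 's) set" where
  "edges P \<pi> = {(x, y). P_pol P \<pi> x y > 0}"

text \<open>In a finite Markov chain, state s is transient iff some state reachable from s
  cannot reach s; it is recurrent otherwise.\<close>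
definition transient :: "('s::finite \<Rightarrow> 'a::finite \<Rightarrow> 's \<Rightarrow> real) \<Rightarrow> ('s \<Rightarrow> 'a \<Rightarrow> real) \<Rightarrow> 's \<Rightarrow> bool" where
  "transient P \<pi> s \<longleftrightarrow> (\<exists>y. (s, y) \<in> (edges P \<pi>)\<^sup>* \<and> (y, s) \<notin> (edges P \<pi>)\<^sup>*)"

definition weakly_communicating :: "('s::finite \<Rightarrow> 'a::finite \<Rightarrow> 's \<Rightarrow> real) \<Rightarrow> bool" where
  "weakly_communicating P \<longleftrightarrow> (\<exists>C::'s set.
     (\<forall>s\<in>C. \<forall>a s'. P s a s' > 0 \<longrightarrow> s' \<in> C) \<and>
     (\<forall>s\<in>C. \<forall>s'\<in>C. \<exists>d::'s \<Rightarrow> 'a. (s, s') \<in> (edges P (det_pol d))\<^sup>*) \<and>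
     (\<forall>s\<in>- C. \<forall>\<pi>. policy \<pi> \<longrightarrow> transient P \<pi> s))"

text \<open>Unichain: every deterministic policy has exactly one recurrent class
  (the recurrent states are pairwise mutually accessible), plus transient states.\<close>
definition unichain :: "('s::finite \<Rightarrow> 'a::finite \<Rightarrow> 's \<Rightarrow> real) \<Rightarrow> bool" where
  "unichain P \<longleftrightarrow> (\<forall>d::'s \<Rightarrow> 'a. \<forall>x y.
     \<not> transient P (det_pol d) x \<and> \<not> transient P (det_pol d) y \<longrightarrow>
     (x, y) \<in> (edges P (det_pol d))\<^sup>*)"

fun arvi :: "('s::finite \<Rightarrow> 'a::finite \<Rightarrow> 's \<Rightarrow> real) \<Rightarrow> ('s \<Rightarrow> 'a \<Rightarrow> real) \<Rightarrow> (real^'s \<Rightarrow> real) \<Rightarrow> real^'s \<Rightarrow> nat \<Rightarrow> real^'s" where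
  "arvi P r f h0 0 = h0"
| "arvi P r f h0 (Suc k) =
     (2 / (real k + 2)) *\<^sub>R h0 +
     (1 - 2 / (real k + 2)) *\<^sub>R (bellman P r (arvi P r f h0 k) - vec (f (arvi P r f h0 k)))"

end

theory Submission
  imports Defs "HOL-Real_Asymp.Real_Asymp"
begin

(*
  Because the optimal gain g* is superharmonic for every action and harmonic for the policy
  attaining the modified Bellman equations, its maximum and minimum are attained at recurrent
  states of that policy; weak communication puts these in the communicating class, where
  superharmonic functions are constant, so g* = m 1.  As T and f commute with adding constant
  vectors, Anchored RVI differs by multiples of 1 from the Halpern iteration
  y_(k+1) = lambda_k h^0 + (1 - lambda_k) S y_k of the sup-norm nonexpansive map S = T - g*,
  whose fixed point is h*, and Th^k - h^k - g* = S y_k - y_k.  The classical Halpern estimate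
  bounds this by 8/(k+1) ||h^0 - h*||, and telescoping the expected rewards gives
  |g* - g^pi| <= ||T^pi h - h - g*|| for every policy pi and every h.

  In a unichain MDP, solutions of Th = h + g* are unique up to constants: the argmax and argmin
  sets of the difference of two solutions are closed under two policies that can be combined
  into one, which would otherwise have two disjoint recurrent classes.  By compactness the
  bounded iterates y_k, normalised at one state, therefore converge to h*, and continuity of
  T and f yields h^k -> h* + c 1 with c = m - f h*.
*)

lemma infnorm_le_cartI:
  fixes x :: "real^'n"
  assumes "\<And>i. \<bar>x $ i\<bar> \<le> c"
  shows "infnorm x \<le> c"
  unfolding infnorm_cart by (rule cSup_least) (auto simp: assms)

lemma infnorm_diff_vec_component_le:
  fixes x :: "real^'n"
  shows "infnorm (x - vec (x $ s)) \<le> 2 * infnorm x"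
proof (rule infnorm_le_cartI)
  fix i
  have "\<bar>x $ i - x $ s\<bar> \<le> \<bar>x $ i\<bar> + \<bar>x $ s\<bar>"
    by (rule abs_triangle_ineq4)
  also have "\<dots> \<le> 2 * infnorm x"
    using component_le_infnorm_cart[of x i] component_le_infnorm_cart[of x s] by linarith
  finally show "\<bar>(x - vec (x $ s)) $ i\<bar> \<le> 2 * infnorm x"
    by simp
qed

lemma average_const:
  fixes p :: "'s::finite \<Rightarrow> real"
  assumes "sum p UNIV = 1"
  shows "(\<Sum>y\<in>UNIV. p y * c) = c"
  using assms by (simp add: sum_distrib_right[symmetric])

lemma abs_average_le:
  fixes p u :: "'s::finite \<Rightarrow> real"
  assumes "\<And>y. 0 \<le> p y" and "sum p UNIV = 1" and "\<And>y. \<bar>u y\<bar> \<le> B"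
  shows "\<bar>\<Sum>y\<in>UNIV. p y * u y\<bar> \<le> B"
proof -
  have "\<bar>\<Sum>y\<in>UNIV. p y * u y\<bar> \<le> (\<Sum>y\<in>UNIV. p y * B)"
    by (rule order_trans[OF sum_abs sum_mono]) (simp add: abs_mult assms mult_left_mono)
  then show ?thesis
    using average_const[OF assms(2)] by simp
qed

lemma average_ge_bound_imp_eq:
  fixes p u :: "'s::finite \<Rightarrow> real"
  assumes "\<And>y. 0 \<le> p y" and "sum p UNIV = 1"
    and "\<And>y. 0 < p y \<Longrightarrow> u y \<le> c" and "c \<le> (\<Sum>y\<in>UNIV. p y * u y)" and "0 < p y"
  shows "u y = c"
proof -
  have nonneg: "0 \<le> p z * (c - u z)" for z
    using assms(1)[of z] assms(3)[of z] by (cases "p z = 0") auto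
  have "(\<Sum>z\<in>UNIV. p z * (c - u z)) = c - (\<Sum>z\<in>UNIV. p z * u z)"
    using average_const[OF assms(2), of c] by (simp add: algebra_simps sum_subtractf)
  then have "(\<Sum>z\<in>UNIV. p z * (c - u z)) = 0"
    using assms(4) sum_nonneg[of UNIV "\<lambda>z. p z * (c - u z)"] nonneg by fastforce
  then have "p y * (c - u y) = 0"
    using nonneg by (simp add: sum_nonneg_eq_0_iff)
  then show ?thesis
    using assms(5) by simp
qed

lemma Max_range_diff_le:
  fixes F G :: "'a::finite \<Rightarrow> real"
  assumes "\<And>a. F a - G a \<le> d"
  shows "Max (range F) - Max (range G) \<le> d"
proof -
  have "Max (range F) \<in> range F"
    by (rule Max_in) auto
  then obtain a where "Max (range F) = F a"
    by blast
  moreover have "G a \<le> Max (range G)"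
    by simp
  ultimately show ?thesis
    using assms[of a] by linarith
qed

lemma tendsto_zero_if_infnorm_le:
  fixes x :: "nat \<Rightarrow> 'v::euclidean_space"
  assumes "\<And>k. infnorm (x k) \<le> b k" and "b \<longlonglongrightarrow> 0"
  shows "x \<longlonglongrightarrow> 0"
proof (rule Lim_null_comparison)
  show "\<forall>\<^sub>F k in sequentially. norm (x k) \<le> sqrt (real DIM('v)) * b k"
    using assms(1) by (intro always_eventually allI order_trans[OF norm_le_infnorm] mult_left_mono) auto
  show "(\<lambda>k. sqrt (real DIM('v)) * b k) \<longlonglongrightarrow> 0"
    using tendsto_mult_right_zero[OF assms(2)] .
qed

lemma abs_real_liminf_diff_le:
  fixes u :: "nat \<Rightarrow> real"
  assumes "\<And>T. 1 \<le> T \<Longrightarrow> \<bar>u T - m\<bar> \<le> e + c / real T"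
  shows "\<bar>real_of_ereal (liminf (\<lambda>T. ereal (u T))) - m\<bar> \<le> e"
proof -
  have "(\<lambda>T. m - e - c / real T) \<longlonglongrightarrow> m - e" and "(\<lambda>T. m + e + c / real T) \<longlonglongrightarrow> m + e"
    by real_asymp+
  then have lim: "liminf (\<lambda>T. ereal (m - e - c / real T)) = ereal (m - e)"
    "liminf (\<lambda>T. ereal (m + e + c / real T)) = ereal (m + e)"
    by (simp_all add: lim_imp_Liminf tendsto_ereal)
  have bounds: "\<forall>\<^sub>F T in sequentially. ereal (m - e - c / real T) \<le> ereal (u T)"
    "\<forall>\<^sub>F T in sequentially. ereal (u T) \<le> ereal (m + e + c / real T)"
    by (auto simp: eventually_sequentially abs_le_iff intro!: exI[of _ 1] dest!: assms)
  have "ereal (m - e) \<le> liminf (\<lambda>T. ereal (u T))"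
    using Liminf_mono[OF bounds(1)] lim(1) by simp
  moreover have "liminf (\<lambda>T. ereal (u T)) \<le> ereal (m + e)"
    using Liminf_mono[OF bounds(2)] lim(2) by simp
  ultimately show ?thesis
    by (cases "liminf (\<lambda>T. ereal (u T))") auto
qed

lemma compact_tendsto_unique_root:
  fixes w :: "nat \<Rightarrow> 'a::metric_space" and F :: "'a \<Rightarrow> 'b::t2_space"
  assumes "compact K" and "\<And>k. w k \<in> K" and "continuous_on K F" and "(\<lambda>k. F (w k)) \<longlonglongrightarrow> c"
    and "\<And>z. z \<in> K \<Longrightarrow> F z = c \<Longrightarrow> z = z0"
  shows "w \<longlonglongrightarrow> z0"
proof (rule ccontr)
  assume "\<not> w \<longlonglongrightarrow> z0"
  then obtain e where "0 < e" and "\<forall>n. \<exists>k\<ge>n. e \<le> dist (w k) z0"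
    unfolding lim_sequentially by (auto simp: not_less)
  then have "infinite {k. e \<le> dist (w k) z0}"
    unfolding infinite_nat_iff_unbounded_le by blast
  then obtain \<sigma> :: "nat \<Rightarrow> nat" where "strict_mono \<sigma>" and far: "\<And>n. e \<le> dist (w (\<sigma> n)) z0"
    using infinite_enumerate by blast
  obtain l \<rho> where "l \<in> K" and "strict_mono \<rho>" and lim: "(w \<circ> \<sigma> \<circ> \<rho>) \<longlonglongrightarrow> l"
    using seq_compactE[OF compact_imp_seq_compact[OF assms(1)], of "w \<circ> \<sigma>"] assms(2)
    by (metis comp_apply)
  have "((\<lambda>k. F (w k)) \<circ> (\<sigma> \<circ> \<rho>)) \<longlonglongrightarrow> c"
    using LIMSEQ_subseq_LIMSEQ[OF assms(4)] \<open>strict_mono \<sigma>\<close> \<open>strict_mono \<rho>\<close>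
    by (simp add: strict_mono_o)
  moreover have "((\<lambda>k. F (w k)) \<circ> (\<sigma> \<circ> \<rho>)) \<longlonglongrightarrow> F l"
    using continuous_on_tendsto_compose[OF assms(3) lim \<open>l \<in> K\<close>] assms(2) by (simp add: o_def)
  ultimately have "l = z0"
    using assms(5)[OF \<open>l \<in> K\<close>] LIMSEQ_unique by blast
  then have "(\<lambda>n. dist ((w \<circ> \<sigma> \<circ> \<rho>) n) z0) \<longlonglongrightarrow> 0"
    using tendsto_dist[OF lim tendsto_const, of z0] by simp
  moreover have "e \<le> dist ((w \<circ> \<sigma> \<circ> \<rho>) n) z0" for n
    using far by simp
  ultimately have "e \<le> 0"
    by (intro LIMSEQ_le_const) auto
  with \<open>0 < e\<close> show False
    by simp
qed

section \<open>The Bellman operator\<close>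

lemma mdp_nonneg: "mdp P \<Longrightarrow> 0 \<le> P s a s'"
  unfolding mdp_def by blast

lemma mdp_sum_eq_1: "mdp P \<Longrightarrow> (\<Sum>s'\<in>UNIV. P s a s') = 1"
  unfolding mdp_def by blast

lemma mdp_average_add_vec:
  assumes "mdp P"
  shows "(\<Sum>y\<in>UNIV. P s a y * (v + vec c) $ y) = (\<Sum>y\<in>UNIV. P s a y * v $ y) + c"
  using average_const[OF mdp_sum_eq_1[OF assms], of s a c] by (simp add: algebra_simps sum.distrib)

lemma bellman_ge: "r s a + (\<Sum>y\<in>UNIV. P s a y * V $ y) \<le> bellman P r V $ s"
  unfolding bellman_def by simp

lemma bellman_greedy_ex:
  "\<exists>d. \<forall>s. bellman P r V $ s = r s (d s) + (\<Sum>y\<in>UNIV. P s (d s) y * V $ y)"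
proof -
  have "\<exists>a. bellman P r V $ s = r s a + (\<Sum>y\<in>UNIV. P s a y * V $ y)" for s
  proof -
    have "Max (range (\<lambda>a. r s a + (\<Sum>y\<in>UNIV. P s a y * V $ y)))
        \<in> range (\<lambda>a. r s a + (\<Sum>y\<in>UNIV. P s a y * V $ y))"
      by (rule Max_in) auto
    then show ?thesis
      unfolding bellman_def by fastforce
  qed
  then show ?thesis
    by metis
qed

lemma bellman_add_vec:
  assumes "mdp P"
  shows "bellman P r (v + vec c) = bellman P r v + vec c"
proof -
  have "Max (range (\<lambda>a. r s a + (\<Sum>y\<in>UNIV. P s a y * (v + vec c) $ y))) =
        Max (range (\<lambda>a. r s a + (\<Sum>y\<in>UNIV. P s a y * v $ y))) + c" for s
    unfolding mdp_average_add_vec[OF assms] add.assoc[symmetric]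
    by (rule Max_add_commute) auto
  then show ?thesis
    unfolding bellman_def by (simp add: vec_eq_iff)
qed

lemma bellman_residual_add_vec:
  assumes "mdp P"
  shows "bellman P r (v + vec c) - (v + vec c) = bellman P r v - v"
  by (simp add: bellman_add_vec[OF assms])

lemma infnorm_bellman_diff_le:
  assumes "mdp P"
  shows "infnorm (bellman P r x - bellman P r y) \<le> infnorm (x - y)"
proof (rule infnorm_le_cartI)
  fix s
  have le: "Max (range (\<lambda>a. r s a + (\<Sum>y\<in>UNIV. P s a y * u $ y)))
      - Max (range (\<lambda>a. r s a + (\<Sum>y\<in>UNIV. P s a y * v $ y))) \<le> infnorm (u - v)" for u v
  proof (rule Max_range_diff_le)
    fix a
    have "(r s a + (\<Sum>y\<in>UNIV. P s a y * u $ y)) - (r s a + (\<Sum>y\<in>UNIV. P s a y * v $ y))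
        = (\<Sum>y\<in>UNIV. P s a y * (u - v) $ y)"
      by (simp add: algebra_simps sum_subtractf)
    also have "\<dots> \<le> infnorm (u - v)"
    proof (rule abs_le_D1, rule abs_average_le)
      show "\<bar>(u - v) $ y\<bar> \<le> infnorm (u - v)" for y
        by (rule component_le_infnorm_cart)
    qed (simp_all add: mdp_nonneg[OF assms] mdp_sum_eq_1[OF assms])
    finally show "(r s a + (\<Sum>y\<in>UNIV. P s a y * u $ y)) - (r s a + (\<Sum>y\<in>UNIV. P s a y * v $ y))
        \<le> infnorm (u - v)" .
  qed
  show "\<bar>(bellman P r x - bellman P r y) $ s\<bar> \<le> infnorm (x - y)"
    using le[of x y] le[of y x] infnorm_sub[of y x] by (simp add: bellman_def abs_le_iff)
qed

lemma continuous_on_bellman: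
  fixes P :: "'s::finite \<Rightarrow> 'a::finite \<Rightarrow> 's \<Rightarrow> real"
  assumes "mdp P"
  shows "continuous_on UNIV (bellman P r)"
proof (rule lipschitz_on_continuous_on)
  show "(sqrt (real DIM(real^'s)))-lipschitz_on UNIV (bellman P r)"
  proof (rule lipschitz_onI)
    fix x y :: "real^'s"
    have "dist (bellman P r x) (bellman P r y)
        \<le> sqrt (real DIM(real^'s)) * infnorm (bellman P r x - bellman P r y)"
      unfolding dist_norm by (rule norm_le_infnorm)
    also have "\<dots> \<le> sqrt (real DIM(real^'s)) * dist x y"
      using infnorm_bellman_diff_le[OF assms, of r x y] infnorm_le_norm[of "x - y"]
      by (intro mult_left_mono) (auto simp: dist_norm)
    finally show "dist (bellman P r x) (bellman P r y) \<le> sqrt (real DIM(real^'s)) * dist x y" .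
  qed simp
qed

lemma mod_bellman_fixed_point: "mod_bellman P r g h \<Longrightarrow> bellman P r h = h + g"
  unfolding mod_bellman_def bellman_def by (simp add: vec_eq_iff)

lemma mod_bellman_add_vec:
  assumes "mdp P" and "mod_bellman P r g h"
  shows "mod_bellman P r g (h + vec c)"
proof -
  have "bellman P r (h + vec c) = (h + vec c) + g"
    using bellman_add_vec[OF assms(1)] mod_bellman_fixed_point[OF assms(2)] by simp
  then have "\<forall>s. Max (range (\<lambda>a. r s a + (\<Sum>y\<in>UNIV. P s a y * (h + vec c) $ y)))
      = (h + vec c) $ s + g $ s"
    unfolding bellman_def by (simp add: vec_eq_iff)
  with assms(2) show ?thesis
    unfolding mod_bellman_def mdp_average_add_vec[OF assms(1)] by auto
qed

section \<open>Anchored iteration of a nonexpansive map\<close>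

fun anchored_iter :: "('v::real_vector \<Rightarrow> 'v) \<Rightarrow> 'v \<Rightarrow> nat \<Rightarrow> 'v" where
  "anchored_iter S x0 0 = x0"
| "anchored_iter S x0 (Suc k) =
     (2 / (real k + 2)) *\<^sub>R x0 + (1 - 2 / (real k + 2)) *\<^sub>R S (anchored_iter S x0 k)"

locale nonexpansive_fixed_point =
  fixes N :: "'v::real_vector \<Rightarrow> real" and S :: "'v \<Rightarrow> 'v" and p :: 'v
  assumes N_triangle: "N (x + y) \<le> N x + N y"
    and N_scaleR: "N (c *\<^sub>R x) = \<bar>c\<bar> * N x"
    and nonexpansive: "N (S x - S y) \<le> N (x - y)"
    and fixed_point: "S p = p"
begin

lemma N_zero: "N 0 = 0"
  using N_scaleR[of 0 0] by simp

lemma N_minus_commute: "N (x - y) = N (y - x)"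
  using N_scaleR[of "-1" "x - y"] by simp

lemma N_nonneg: "0 \<le> N x"
  using N_triangle[of x "- x"] N_scaleR[of "-1" x] N_zero by simp

lemma N_lincomb_le:
  assumes "0 \<le> a" and "0 \<le> b"
  shows "N (a *\<^sub>R u + b *\<^sub>R v) \<le> a * N u + b * N v"
  using N_triangle[of "a *\<^sub>R u" "b *\<^sub>R v"] assms by (simp add: N_scaleR)

lemma anchored_iter_dist_le: "N (anchored_iter S x0 k - p) \<le> N (x0 - p)"
proof (induction k)
  case (Suc k)
  define l where "l = 2 / (real k + 2)"
  have l: "0 \<le> l" "l \<le> 1"
    unfolding l_def by (auto simp: field_simps)
  have "anchored_iter S x0 (Suc k) - p
      = l *\<^sub>R (x0 - p) + (1 - l) *\<^sub>R (S (anchored_iter S x0 k) - S p)"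
    by (simp add: l_def fixed_point algebra_simps)
  also have "N \<dots> \<le> l * N (x0 - p) + (1 - l) * N (S (anchored_iter S x0 k) - S p)"
    using l by (intro N_lincomb_le) auto
  also have "\<dots> \<le> l * N (x0 - p) + (1 - l) * N (x0 - p)"
    using nonexpansive[of "anchored_iter S x0 k" p] Suc.IH l
    by (intro add_left_mono mult_left_mono) auto
  finally show ?case
    by (simp add: algebra_simps)
qed simp

lemma S_anchored_iter_minus_anchor_le: "N (S (anchored_iter S x0 k) - x0) \<le> 2 * N (x0 - p)"
proof -
  have "N (S (anchored_iter S x0 k) - x0) \<le> N (S (anchored_iter S x0 k) - S p) + N (p - x0)"
    using N_triangle[of "S (anchored_iter S x0 k) - S p" "p - x0"] by (simp add: fixed_point)
  also have "\<dots> \<le> N (x0 - p) + N (x0 - p)"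
    using nonexpansive[of "anchored_iter S x0 k" p] anchored_iter_dist_le[of x0 k]
      N_minus_commute[of p x0] by linarith
  finally show ?thesis
    by simp
qed

lemma anchored_iter_step_le:
  "N (anchored_iter S x0 (Suc k) - anchored_iter S x0 k)
     \<le> 4 * real k / ((real k + 1) * (real k + 2)) * N (x0 - p)"
proof (induction k)
  case 0
  then show ?case
    by (simp add: N_zero)
next
  case (Suc k)
  define D where "D = N (x0 - p)"
  define l where "l j = 2 / (real j + 2)" for j :: nat
  let ?y = "anchored_iter S x0"
  have "?y (Suc (Suc k)) - ?y (Suc k)
      = (l k - l (Suc k)) *\<^sub>R (S (?y k) - x0) + (1 - l (Suc k)) *\<^sub>R (S (?y (Suc k)) - S (?y k))"
    by (simp add: l_def algebra_simps)
  also have "N \<dots> \<le> (l k - l (Suc k)) * N (S (?y k) - x0)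
      + (1 - l (Suc k)) * N (S (?y (Suc k)) - S (?y k))"
    by (rule N_lincomb_le) (simp_all add: l_def field_simps)
  also have "\<dots> \<le> (l k - l (Suc k)) * (2 * D)
      + (1 - l (Suc k)) * (4 * real k / ((real k + 1) * (real k + 2)) * D)"
  proof (rule add_mono; rule mult_left_mono)
    show "N (S (?y (Suc k)) - S (?y k)) \<le> 4 * real k / ((real k + 1) * (real k + 2)) * D"
      using nonexpansive[of "?y (Suc k)" "?y k"] Suc.IH unfolding D_def by linarith
  qed (auto simp: D_def S_anchored_iter_minus_anchor_le l_def field_simps)
  also have "\<dots> = 4 * real (Suc k) / ((real (Suc k) + 1) * (real (Suc k) + 2)) * D"
  proof -
    have "real k + 1 > 0" "real k + 2 > 0" "real k + 3 > 0"
      by auto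
    then show ?thesis
      by (simp add: l_def divide_simps) (simp add: algebra_simps)
  qed
  finally show ?case
    unfolding D_def .
qed

lemma anchored_iter_residual_le:
  "N (S (anchored_iter S x0 k) - anchored_iter S x0 k) \<le> 8 / (real k + 1) * N (x0 - p)"
proof -
  define D where "D = N (x0 - p)"
  let ?y = "anchored_iter S x0"
  have "S (?y k) - ?y (Suc k) = (2 / (real k + 2)) *\<^sub>R (S (?y k) - x0)"
    by (simp add: algebra_simps)
  then have "N (S (?y k) - ?y (Suc k)) = 2 / (real k + 2) * N (S (?y k) - x0)"
    by (simp add: N_scaleR)
  also have "\<dots> \<le> 2 / (real k + 2) * (2 * D)"
    unfolding D_def by (rule mult_left_mono) (simp_all add: S_anchored_iter_minus_anchor_le)
  finally have "N (S (?y k) - ?y (Suc k)) \<le> 2 / (real k + 2) * (2 * D)" .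
  moreover have "N (S (?y k) - ?y k) \<le> N (S (?y k) - ?y (Suc k)) + N (?y (Suc k) - ?y k)"
    using N_triangle[of "S (?y k) - ?y (Suc k)" "?y (Suc k) - ?y k"] by simp
  ultimately have "N (S (?y k) - ?y k)
      \<le> 2 / (real k + 2) * (2 * D) + 4 * real k / ((real k + 1) * (real k + 2)) * D"
    using anchored_iter_step_le[of x0 k] unfolding D_def by linarith
  also have "\<dots> = 4 * (2 * real k + 1) / ((real k + 1) * (real k + 2)) * D"
  proof -
    have "real k + 1 > 0" "real k + 2 > 0"
      by auto
    then show ?thesis
      by (simp add: divide_simps) (simp add: algebra_simps)
  qed
  also have "\<dots> \<le> 8 / (real k + 1) * D"
  proof (rule mult_right_mono)
    have "real k + 1 > 0" "real k + 2 > 0"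
      by auto
    then show "4 * (2 * real k + 1) / ((real k + 1) * (real k + 2)) \<le> 8 / (real k + 1)"
      by (simp add: divide_simps)
  qed (simp add: D_def N_nonneg)
  finally show ?thesis
    unfolding D_def .
qed

end

section \<open>Closed sets and recurrent states\<close>

lemma edges_det_pol: "edges P (det_pol d) = {(x, y). 0 < P x (d x) y}"
proof -
  have "P_pol P (det_pol d) x y = P x (d x) y" for x y
  proof -
    have "P_pol P (det_pol d) x y = (\<Sum>a\<in>UNIV. if a = d x then P x a y else 0)"
      unfolding P_pol_def det_pol_def by (rule sum.cong) auto
    then show ?thesis
      by simp
  qed
  then show ?thesis
    unfolding edges_def by simp
qed

lemma policy_det_pol: "policy (det_pol d)"
  unfolding policy_def det_pol_def by (simp add: if_distrib cong: if_cong)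

definition closed_under :: "('s::finite \<Rightarrow> 'a::finite \<Rightarrow> 's \<Rightarrow> real) \<Rightarrow> ('s \<Rightarrow> 'a) \<Rightarrow> 's set \<Rightarrow> bool" where
  "closed_under P d A \<longleftrightarrow> (\<forall>x\<in>A. \<forall>y. 0 < P x (d x) y \<longrightarrow> y \<in> A)"

lemma closed_under_rtrancl:
  assumes "closed_under P d A" and "x \<in> A" and "(x, y) \<in> (edges P (det_pol d))\<^sup>*"
  shows "y \<in> A"
  using assms(3,2) by induction (use assms(1) in \<open>auto simp: closed_under_def edges_det_pol\<close>)

lemma closed_set_has_recurrent:
  fixes E :: "('s::finite \<times> 's) set"
  assumes "x0 \<in> A" and "E `` A \<subseteq> A"
  shows "\<exists>x\<in>A. \<forall>y. (x, y) \<in> E\<^sup>* \<longrightarrow> (y, x) \<in> E\<^sup>*"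
proof -
  \<comment> \<open>A state of \<open>A\<close> with the fewest reachable states is recurrent.\<close>
  obtain x where "x \<in> A" and min: "\<And>z. z \<in> A \<Longrightarrow> card (E\<^sup>* `` {x}) \<le> card (E\<^sup>* `` {z})"
    using ex_has_least_nat[of "\<lambda>z. z \<in> A" x0 "\<lambda>z. card (E\<^sup>* `` {z})"] assms(1) by blast
  have "(y, x) \<in> E\<^sup>*" if "(x, y) \<in> E\<^sup>*" for y
  proof (rule ccontr)
    assume "(y, x) \<notin> E\<^sup>*"
    then have "E\<^sup>* `` {y} \<subset> E\<^sup>* `` {x}"
      using that by (auto intro: rtrancl_trans)
    then have "card (E\<^sup>* `` {y}) < card (E\<^sup>* `` {x})"
      by (rule psubset_card_mono[OF finite])
    moreover have "y \<in> A"
      using that \<open>x \<in> A\<close> Image_closed_trancl[OF assms(2)] by blast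
    ultimately show False
      using min by fastforce
  qed
  with \<open>x \<in> A\<close> show ?thesis
    by blast
qed

lemma closed_under_has_recurrent:
  assumes "closed_under P d A" and "x0 \<in> A"
  shows "\<exists>x\<in>A. \<not> transient P (det_pol d) x"
proof -
  have "edges P (det_pol d) `` A \<subseteq> A"
    using assms(1) by (auto simp: closed_under_def edges_det_pol)
  then obtain x where "x \<in> A" and "\<forall>y. (x, y) \<in> (edges P (det_pol d))\<^sup>* \<longrightarrow> (y, x) \<in> (edges P (det_pol d))\<^sup>*"
    using closed_set_has_recurrent[OF assms(2)] by blast
  then show ?thesis
    unfolding transient_def by blast
qed

lemma unichain_closed_under_Int:
  assumes "unichain P" and "closed_under P d1 A" and "closed_under P d2 B" and "a \<in> A" and "b \<in> B"
  shows "A \<inter> B \<noteq> {}"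
proof
  assume disjoint: "A \<inter> B = {}"
  define d where "d x = (if x \<in> A then d1 x else d2 x)" for x
  have "closed_under P d A" and "closed_under P d B"
    using assms(2,3) disjoint by (auto simp: closed_under_def d_def)
  obtain xA where "xA \<in> A" and xA: "\<not> transient P (det_pol d) xA"
    using closed_under_has_recurrent[OF \<open>closed_under P d A\<close> assms(4)] by blast
  obtain xB where "xB \<in> B" and xB: "\<not> transient P (det_pol d) xB"
    using closed_under_has_recurrent[OF \<open>closed_under P d B\<close> assms(5)] by blast
  have "(xA, xB) \<in> (edges P (det_pol d))\<^sup>*"
    using assms(1) xA xB unfolding unichain_def by blast
  then have "xB \<in> A"
    by (rule closed_under_rtrancl[OF \<open>closed_under P d A\<close> \<open>xA \<in> A\<close>])
  with \<open>xB \<in> B\<close> disjoint show False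
    by blast
qed

lemma closed_under_argmax:
  fixes u :: "'s::finite \<Rightarrow> real"
  assumes "mdp P" and "\<And>x. u x \<le> (\<Sum>y\<in>UNIV. P x (d x) y * u y)"
  shows "closed_under P d {x. u x = Max (range u)}"
  unfolding closed_under_def
proof (intro ballI allI impI)
  fix x y
  assume "x \<in> {x. u x = Max (range u)}" and "0 < P x (d x) y"
  have "u y = Max (range u)"
  proof (rule average_ge_bound_imp_eq[of "P x (d x)"])
    show "Max (range u) \<le> (\<Sum>y\<in>UNIV. P x (d x) y * u y)"
      using assms(2)[of x] \<open>x \<in> {x. u x = Max (range u)}\<close> by simp
  qed (simp_all add: \<open>0 < P x (d x) y\<close> mdp_nonneg[OF assms(1)] mdp_sum_eq_1[OF assms(1)])
  then show "y \<in> {x. u x = Max (range u)}"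
    by simp
qed

lemma closed_under_argmin:
  fixes u :: "'s::finite \<Rightarrow> real"
  assumes "mdp P" and "\<And>x. (\<Sum>y\<in>UNIV. P x (d x) y * u y) \<le> u x"
  shows "closed_under P d {x. u x = Min (range u)}"
  unfolding closed_under_def
proof (intro ballI allI impI)
  fix x y
  assume "x \<in> {x. u x = Min (range u)}" and "0 < P x (d x) y"
  have "- u y = - Min (range u)"
  proof (rule average_ge_bound_imp_eq[of "P x (d x)"])
    show "- Min (range u) \<le> (\<Sum>y\<in>UNIV. P x (d x) y * - u y)"
      using assms(2)[of x] \<open>x \<in> {x. u x = Min (range u)}\<close> by (simp add: sum_negf)
  qed (simp_all add: \<open>0 < P x (d x) y\<close> mdp_nonneg[OF assms(1)] mdp_sum_eq_1[OF assms(1)])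
  then show "y \<in> {x. u x = Min (range u)}"
    unfolding mem_Collect_eq by linarith
qed

section \<open>Solutions of the modified Bellman equations\<close>

lemma superharmonic_const_on_communicating_class:
  fixes P :: "'s::finite \<Rightarrow> 'a::finite \<Rightarrow> 's \<Rightarrow> real" and u :: "'s \<Rightarrow> real"
  assumes mdp: "mdp P"
    and closed: "\<forall>s\<in>C. \<forall>a s'. 0 < P s a s' \<longrightarrow> s' \<in> C"
    and communicating: "\<forall>s\<in>C. \<forall>s'\<in>C. \<exists>d::'s \<Rightarrow> 'a. (s, s') \<in> (edges P (det_pol d))\<^sup>*"
    and superharmonic: "\<And>s a. (\<Sum>y\<in>UNIV. P s a y * u y) \<le> u s"
    and "x \<in> C" and "x' \<in> C"
  shows "u x = u x'"
proof -
  define m where "m = Min (u ` C)"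
  have propagate: "y \<in> C \<and> u y = m" if "s \<in> C" and "u s = m" and "0 < P s a y" for s a y
  proof
    show "y \<in> C"
      using closed that by blast
    have "- u y = - m"
    proof (rule average_ge_bound_imp_eq[of "P s a"])
      show "- u z \<le> - m" if "0 < P s a z" for z
        using closed \<open>s \<in> C\<close> that by (simp add: m_def)
      show "- m \<le> (\<Sum>z\<in>UNIV. P s a z * - u z)"
        using superharmonic[of s a] \<open>u s = m\<close> by (simp add: sum_negf)
    qed (use that in \<open>simp_all add: mdp_nonneg[OF mdp] mdp_sum_eq_1[OF mdp]\<close>)
    then show "u y = m"
      by simp
  qed
  have "m \<in> u ` C"
    unfolding m_def using \<open>x \<in> C\<close> by (intro Min_in) auto
  then obtain s0 where "u s0 = m" and "s0 \<in> C"
    by (metis imageE)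
  have "u s = m" if "s \<in> C" for s
  proof -
    obtain d :: "'s \<Rightarrow> 'a" where "(s0, s) \<in> (edges P (det_pol d))\<^sup>*"
      using communicating[rule_format, OF \<open>s0 \<in> C\<close> \<open>s \<in> C\<close>] ..
    then have "s \<in> C \<and> u s = m"
    proof induction
      case (step y z)
      then show ?case
        using propagate[of y "d y" z] by (simp add: edges_det_pol)
    qed (simp add: \<open>s0 \<in> C\<close> \<open>u s0 = m\<close>)
    then show ?thesis
      by simp
  qed
  with \<open>x \<in> C\<close> \<open>x' \<in> C\<close> show ?thesis
    by simp
qed

lemma mod_bellman_gain_const:
  fixes P :: "'s::finite \<Rightarrow> 'a::finite \<Rightarrow> 's \<Rightarrow> real"
  assumes mdp: "mdp P" and "weakly_communicating P" and "mod_bellman P r g h"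
  shows "\<exists>m. g = vec m"
proof -
  let ?M = "Max (range (\<lambda>s. g $ s))" and ?m = "Min (range (\<lambda>s. g $ s))"
  have superharmonic: "(\<Sum>y\<in>UNIV. P s a y * g $ y) \<le> g $ s" for s a
  proof -
    have "(\<Sum>y\<in>UNIV. P s a y * g $ y) \<le> Max (range (\<lambda>a. \<Sum>y\<in>UNIV. P s a y * g $ y))"
      by simp
    also have "\<dots> = g $ s"
      using assms(3) unfolding mod_bellman_def by blast
    finally show ?thesis .
  qed
  obtain d where d: "\<And>s. (\<Sum>y\<in>UNIV. P s (d s) y * g $ y) = g $ s"
    using assms(3) unfolding mod_bellman_def by blast
  obtain C :: "'s set" where closed: "\<forall>s\<in>C. \<forall>a s'. 0 < P s a s' \<longrightarrow> s' \<in> C"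
    and communicating: "\<forall>s\<in>C. \<forall>s'\<in>C. \<exists>d'::'s \<Rightarrow> 'a. (s, s') \<in> (edges P (det_pol d'))\<^sup>*"
    and transient: "\<forall>s\<in>- C. \<forall>\<pi>. policy \<pi> \<longrightarrow> transient P \<pi> s"
    using assms(2) unfolding weakly_communicating_def by blast
  have "?M \<in> range (\<lambda>s. g $ s)" and "?m \<in> range (\<lambda>s. g $ s)"
    by (intro Max_in Min_in; simp)+
  then obtain sA sB where "sA \<in> {x. g $ x = ?M}" and "sB \<in> {x. g $ x = ?m}"
    by (metis (mono_tags, lifting) mem_Collect_eq rangeE)
  moreover have "closed_under P d {x. g $ x = ?M}"
    by (rule closed_under_argmax[OF mdp]) (simp add: d)
  moreover have "closed_under P d {x. g $ x = ?m}"
    by (rule closed_under_argmin[OF mdp]) (simp add: d)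
  ultimately obtain xA xB where xA: "xA \<in> {x. g $ x = ?M}" "\<not> transient P (det_pol d) xA"
    and xB: "xB \<in> {x. g $ x = ?m}" "\<not> transient P (det_pol d) xB"
    using closed_under_has_recurrent by meson
  have "xA \<in> C" and "xB \<in> C"
    using transient policy_det_pol xA(2) xB(2) by blast+
  then have "g $ xA = g $ xB"
    by (rule superharmonic_const_on_communicating_class[OF mdp closed communicating superharmonic])
  moreover have "g $ xB \<le> g $ s" and "g $ s \<le> g $ xA" for s
    using xA(1) xB(1) by simp_all
  ultimately have "g $ s = g $ xA" for s
    by (metis order_antisym)
  then show ?thesis
    by (auto simp: vec_eq_iff)
qed

lemma unichain_bellman_solution_unique:
  fixes P :: "'s::finite \<Rightarrow> 'a::finite \<Rightarrow> 's \<Rightarrow> real"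
  assumes mdp: "mdp P" and "unichain P" and "mod_bellman P r g h" and "bellman P r h' = h' + g"
  shows "\<exists>c. h' = h + vec c"
proof -
  define u where "u s = h' $ s - h $ s" for s
  have avg_u: "(\<Sum>y\<in>UNIV. P s a y * u y)
      = (\<Sum>y\<in>UNIV. P s a y * h' $ y) - (\<Sum>y\<in>UNIV. P s a y * h $ y)" for s a
    unfolding u_def by (simp add: algebra_simps sum_subtractf)
  have h: "bellman P r h = h + g"
    using assms(3) by (rule mod_bellman_fixed_point)
  obtain d' where d': "\<And>s. bellman P r h' $ s = r s (d' s) + (\<Sum>y\<in>UNIV. P s (d' s) y * h' $ y)"
    using bellman_greedy_ex by blast
  obtain d where d: "\<And>s. r s (d s) + (\<Sum>y\<in>UNIV. P s (d s) y * h $ y) = h $ s + g $ s"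
    using assms(3) unfolding mod_bellman_def by blast
  have "u x \<le> (\<Sum>y\<in>UNIV. P x (d' x) y * u y)" for x
    using d'[of x] bellman_ge[of r x "d' x" P h] avg_u[of x "d' x"] assms(4) h
    unfolding u_def by (simp add: vec_eq_iff)
  then have A: "closed_under P d' {x. u x = Max (range u)}"
    by (rule closed_under_argmax[OF mdp])
  have "(\<Sum>y\<in>UNIV. P x (d x) y * u y) \<le> u x" for x
    using d[of x] bellman_ge[of r x "d x" P h'] avg_u[of x "d x"] assms(4)
    unfolding u_def by (simp add: vec_eq_iff)
  then have B: "closed_under P d {x. u x = Min (range u)}"
    by (rule closed_under_argmin[OF mdp])
  have "Max (range u) \<in> range u" "Min (range u) \<in> range u"
    by (intro Max_in Min_in; simp)+
  then have "{x. u x = Max (range u)} \<inter> {x. u x = Min (range u)} \<noteq> {}"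
    by (metis (mono_tags) unichain_closed_under_Int[OF assms(2) A B] mem_Collect_eq rangeE)
  then obtain x where "u x = Max (range u)" "u x = Min (range u)"
    by blast
  moreover have "u s \<le> Max (range u)" and "Min (range u) \<le> u s" for s
    by simp_all
  ultimately have "u s = u x" for s
    by (metis order_antisym)
  then have "h' = h + vec (u x)"
    unfolding u_def by (simp add: vec_eq_iff algebra_simps)
  then show ?thesis ..
qed

lemma unichain_bellman_solution_eq:
  fixes P :: "'s::finite \<Rightarrow> 'a::finite \<Rightarrow> 's \<Rightarrow> real"
  assumes "mdp P" and "unichain P" and "mod_bellman P r g h"
    and "bellman P r z = z + g" and "z $ s = h $ s"
  shows "z = h"
proof -
  obtain c where "z = h + vec c"
    using unichain_bellman_solution_unique[OF assms(1-4)] by blast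
  with assms(5) show ?thesis
    by simp
qed

section \<open>The gain of a policy\<close>

lemma P_pol_nonneg: "mdp P \<Longrightarrow> policy \<pi> \<Longrightarrow> 0 \<le> P_pol P \<pi> x y"
  unfolding P_pol_def policy_def by (auto intro!: sum_nonneg simp: mdp_nonneg)

lemma sum_P_pol:
  assumes "mdp P" and "policy \<pi>"
  shows "(\<Sum>y\<in>UNIV. P_pol P \<pi> x y) = 1"
proof -
  have "(\<Sum>y\<in>UNIV. P_pol P \<pi> x y) = (\<Sum>a\<in>UNIV. \<Sum>y\<in>UNIV. \<pi> x a * P x a y)"
    unfolding P_pol_def by (rule sum.swap)
  also have "\<dots> = 1"
    using assms by (simp add: policy_def mdp_sum_eq_1 sum_distrib_left[symmetric])
  finally show ?thesis .
qed

lemma state_dist_nonneg: "mdp P \<Longrightarrow> policy \<pi> \<Longrightarrow> 0 \<le> state_dist P \<pi> s0 t x"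
  by (induction t arbitrary: x) (auto intro!: sum_nonneg simp: P_pol_nonneg)

lemma sum_state_dist: "mdp P \<Longrightarrow> policy \<pi> \<Longrightarrow> (\<Sum>x\<in>UNIV. state_dist P \<pi> s0 t x) = 1"
proof (induction t)
  case (Suc t)
  have "(\<Sum>x\<in>UNIV. state_dist P \<pi> s0 (Suc t) x)
      = (\<Sum>y\<in>UNIV. state_dist P \<pi> s0 t y * (\<Sum>x\<in>UNIV. P_pol P \<pi> y x))"
    unfolding state_dist.simps sum_distrib_left by (rule sum.swap)
  then show ?case
    using Suc by (simp add: sum_P_pol)
qed simp

definition state_expect ::
    "('s::finite \<Rightarrow> 'a::finite \<Rightarrow> 's \<Rightarrow> real) \<Rightarrow> ('s \<Rightarrow> 'a \<Rightarrow> real) \<Rightarrow> 's \<Rightarrow> nat \<Rightarrow> real^'s \<Rightarrow> real" where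
  "state_expect P \<pi> s0 t v = (\<Sum>x\<in>UNIV. state_dist P \<pi> s0 t x * v $ x)"

lemma abs_state_expect_le:
  assumes "mdp P" and "policy \<pi>"
  shows "\<bar>state_expect P \<pi> s0 t v\<bar> \<le> infnorm v"
  unfolding state_expect_def
  by (rule abs_average_le) (simp_all add: assms state_dist_nonneg sum_state_dist component_le_infnorm_cart)

lemma state_expect_Suc:
  "state_expect P \<pi> s0 (Suc t) v = state_expect P \<pi> s0 t (\<chi> x. \<Sum>y\<in>UNIV. P_pol P \<pi> x y * v $ y)"
proof -
  have "state_expect P \<pi> s0 (Suc t) v
      = (\<Sum>y\<in>UNIV. \<Sum>x\<in>UNIV. state_dist P \<pi> s0 t x * P_pol P \<pi> x y * v $ y)"
    unfolding state_expect_def state_dist.simps by (simp add: sum_distrib_right)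
  also have "\<dots> = (\<Sum>x\<in>UNIV. \<Sum>y\<in>UNIV. state_dist P \<pi> s0 t x * P_pol P \<pi> x y * v $ y)"
    by (rule sum.swap)
  also have "\<dots> = state_expect P \<pi> s0 t (\<chi> x. \<Sum>y\<in>UNIV. P_pol P \<pi> x y * v $ y)"
    unfolding state_expect_def by (simp add: sum_distrib_left mult.assoc)
  finally show ?thesis .
qed

lemma exp_reward_eq:
  assumes "mdp P" and "policy \<pi>"
  shows "exp_reward P r \<pi> s0 t = state_expect P \<pi> s0 t h - state_expect P \<pi> s0 (Suc t) h + m
    + state_expect P \<pi> s0 t (bellman_pol P r \<pi> h - h - vec m)"
proof -
  let ?Ph = "\<chi> x. \<Sum>y\<in>UNIV. P_pol P \<pi> x y * h $ y"
  have "(\<chi> x. r_pol r \<pi> x) = h + vec m + (bellman_pol P r \<pi> h - h - vec m) - ?Ph"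
    by (simp add: vec_eq_iff bellman_pol_def)
  then have "exp_reward P r \<pi> s0 t
      = state_expect P \<pi> s0 t (h + vec m + (bellman_pol P r \<pi> h - h - vec m) - ?Ph)"
    unfolding exp_reward_def state_expect_def by (metis vec_lambda_beta)
  also have "\<dots> = state_expect P \<pi> s0 t h + m
      + state_expect P \<pi> s0 t (bellman_pol P r \<pi> h - h - vec m) - state_expect P \<pi> s0 t ?Ph"
    using average_const[OF sum_state_dist[OF assms], of s0 t m]
    unfolding state_expect_def by (simp add: algebra_simps sum.distrib sum_subtractf)
  finally show ?thesis
    by (simp add: state_expect_Suc)
qed

lemma sum_exp_reward_eq:
  assumes "mdp P" and "policy \<pi>"
  shows "(\<Sum>t<T. exp_reward P r \<pi> s0 t) = state_expect P \<pi> s0 0 h - state_expect P \<pi> s0 T h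
    + real T * m + (\<Sum>t<T. state_expect P \<pi> s0 t (bellman_pol P r \<pi> h - h - vec m))"
proof -
  have "(\<Sum>t<T. exp_reward P r \<pi> s0 t) = (\<Sum>t<T. (state_expect P \<pi> s0 t h - state_expect P \<pi> s0 (Suc t) h)
      + m + state_expect P \<pi> s0 t (bellman_pol P r \<pi> h - h - vec m))"
    by (rule sum.cong) (simp_all add: exp_reward_eq[OF assms])
  then show ?thesis
    using sum_lessThan_telescope'[of "\<lambda>t. state_expect P \<pi> s0 t h" T] by (simp add: sum.distrib)
qed

lemma abs_sum_exp_reward_diff_le:
  assumes "mdp P" and "policy \<pi>"
  shows "\<bar>(\<Sum>t<T. exp_reward P r \<pi> s0 t) - real T * m\<bar>
    \<le> real T * infnorm (bellman_pol P r \<pi> h - h - vec m) + 2 * infnorm h"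
proof -
  define e where "e = bellman_pol P r \<pi> h - h - vec m"
  have "\<bar>\<Sum>t<T. state_expect P \<pi> s0 t e\<bar> \<le> (\<Sum>t<T. \<bar>state_expect P \<pi> s0 t e\<bar>)"
    by (rule sum_abs)
  also have "\<dots> \<le> (\<Sum>t<T. infnorm e)"
    by (rule sum_mono) (rule abs_state_expect_le[OF assms])
  finally have "\<bar>\<Sum>t<T. state_expect P \<pi> s0 t e\<bar> \<le> real T * infnorm e"
    by simp
  moreover have "\<bar>state_expect P \<pi> s0 0 h - state_expect P \<pi> s0 T h\<bar> \<le> 2 * infnorm h"
    using abs_state_expect_le[OF assms, of s0 0 h] abs_state_expect_le[OF assms, of s0 T h] by linarith
  ultimately show ?thesis
    unfolding sum_exp_reward_eq[OF assms, of r s0 T h m] e_def by linarith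
qed

lemma abs_average_reward_diff_le:
  assumes "mdp P" and "policy \<pi>" and "1 \<le> T"
  shows "\<bar>1 / real T * (\<Sum>t<T. exp_reward P r \<pi> s0 t) - m\<bar>
    \<le> infnorm (bellman_pol P r \<pi> h - h - vec m) + 2 * infnorm h / real T"
proof -
  have "1 / real T * (\<Sum>t<T. exp_reward P r \<pi> s0 t) - m
      = ((\<Sum>t<T. exp_reward P r \<pi> s0 t) - real T * m) / real T"
    using assms(3) by (simp add: field_simps)
  then have "\<bar>1 / real T * (\<Sum>t<T. exp_reward P r \<pi> s0 t) - m\<bar>
      = \<bar>(\<Sum>t<T. exp_reward P r \<pi> s0 t) - real T * m\<bar> / real T"
    by simp
  also have "\<dots> \<le> (real T * infnorm (bellman_pol P r \<pi> h - h - vec m) + 2 * infnorm h) / real T"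
    using abs_sum_exp_reward_diff_le[OF assms(1,2)] by (rule divide_right_mono) simp
  also have "\<dots> = infnorm (bellman_pol P r \<pi> h - h - vec m) + 2 * infnorm h / real T"
    using assms(3) by (simp add: add_divide_distrib)
  finally show ?thesis .
qed

lemma infnorm_gain_diff_le:
  fixes P :: "'s::finite \<Rightarrow> 'a::finite \<Rightarrow> 's \<Rightarrow> real"
  assumes "mdp P" and "policy \<pi>"
  shows "infnorm (vec m - gain P r \<pi>) \<le> infnorm (bellman_pol P r \<pi> h - h - vec m)"
proof (rule infnorm_le_cartI)
  fix s0
  have "\<bar>real_of_ereal (liminf (\<lambda>T. ereal (1 / real T * (\<Sum>t<T. exp_reward P r \<pi> s0 t)))) - m\<bar>
      \<le> infnorm (bellman_pol P r \<pi> h - h - vec m)"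
    by (rule abs_real_liminf_diff_le) (rule abs_average_reward_diff_le[OF assms])
  then show "\<bar>(vec m - gain P r \<pi>) $ s0\<bar> \<le> infnorm (bellman_pol P r \<pi> h - h - vec m)"
    by (simp add: gain_def abs_minus_commute)
qed

section \<open>Anchored relative value iteration\<close>

lemma nonexpansive_fixed_point_bellman:
  assumes "mdp P" and "mod_bellman P r g h"
  shows "nonexpansive_fixed_point infnorm (\<lambda>x. bellman P r x - g) h"
proof
  show "infnorm (bellman P r x - g - (bellman P r y - g)) \<le> infnorm (x - y)" for x y
    using infnorm_bellman_diff_le[OF assms(1)] by simp
  show "bellman P r h - g = h"
    by (simp add: mod_bellman_fixed_point[OF assms(2)])
qed (simp_all add: infnorm_triangle infnorm_mul)

lemma arvi_eq_anchored_iter_add_vec: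
  assumes "mdp P"
  shows "\<exists>c. arvi P r f h0 k = anchored_iter (\<lambda>x. bellman P r x - vec m) h0 k + vec c"
proof (induction k)
  case (Suc k)
  let ?S = "\<lambda>x. bellman P r x - vec m"
  obtain c where c: "arvi P r f h0 k = anchored_iter ?S h0 k + vec c"
    using Suc.IH by blast
  define l where "l = 2 / (real k + 2)"
  have "bellman P r (arvi P r f h0 k) - vec (f (arvi P r f h0 k))
      = ?S (anchored_iter ?S h0 k) + vec (c + m - f (arvi P r f h0 k))"
    by (subst (1) c) (simp add: bellman_add_vec[OF assms] vec_eq_iff)
  then have "arvi P r f h0 (Suc k)
      = anchored_iter ?S h0 (Suc k) + vec ((1 - l) * (c + m - f (arvi P r f h0 k)))"
    by (simp add: l_def[symmetric] vec_eq_iff algebra_simps)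
  then show ?case ..
qed (auto intro: exI[of _ 0])

lemma infnorm_arvi_residual_le:
  assumes "mdp P" and "mod_bellman P r (vec m) h"
  shows "infnorm (bellman P r (arvi P r f h0 k) - arvi P r f h0 k - vec m)
    \<le> 8 / (real k + 1) * infnorm (h0 - h)"
proof -
  interpret nonexpansive_fixed_point infnorm "\<lambda>x. bellman P r x - vec m" h
    by (rule nonexpansive_fixed_point_bellman[OF assms])
  let ?y = "anchored_iter (\<lambda>x. bellman P r x - vec m) h0"
  obtain c where "arvi P r f h0 k = ?y k + vec c"
    using arvi_eq_anchored_iter_add_vec[OF assms(1)] by blast
  then have "bellman P r (arvi P r f h0 k) - arvi P r f h0 k = bellman P r (?y k) - ?y k"
    by (simp only: bellman_residual_add_vec[OF assms(1)])
  then have residual_eq: "bellman P r (arvi P r f h0 k) - arvi P r f h0 k - vec m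
      = bellman P r (?y k) - vec m - ?y k"
    by (simp add: algebra_simps)
  show ?thesis
    unfolding residual_eq by (rule anchored_iter_residual_le)
qed

lemma unichain_anchored_iter_tendsto:
  fixes P :: "'s::finite \<Rightarrow> 'a::finite \<Rightarrow> 's \<Rightarrow> real" and h0 :: "real^'s"
  assumes mdp: "mdp P" and "unichain P" and "mod_bellman P r g h"
  defines "y \<equiv> anchored_iter (\<lambda>x. bellman P r x - g) h0"
  shows "(\<lambda>k. y k - vec ((y k - h) $ s)) \<longlonglongrightarrow> h"
proof -
  interpret nonexpansive_fixed_point infnorm "\<lambda>x. bellman P r x - g" h
    by (rule nonexpansive_fixed_point_bellman[OF mdp assms(3)])
  define w where "w k = y k - vec ((y k - h) $ s)" for k
  define R where "R = sqrt (real DIM(real^'s)) * (2 * infnorm (h0 - h))"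
  \<comment> \<open>Fixing the value at \<open>s\<close> removes the constant vectors, along which the residual has
    no unique zero.\<close>
  define K where "K = cball h R \<inter> {x. x $ s = h $ s}"
  have "compact K"
    unfolding K_def by (intro compact_Int_closed closed_Collect_eq continuous_intros) auto
  have "w k \<in> K" for k
  proof -
    have "infnorm (w k - h) \<le> 2 * infnorm (y k - h)"
      using infnorm_diff_vec_component_le[of "y k - h" s] by (simp add: w_def algebra_simps)
    also have "\<dots> \<le> 2 * infnorm (h0 - h)"
      using anchored_iter_dist_le[of h0 k] by (simp add: y_def)
    finally have "infnorm (w k - h) \<le> 2 * infnorm (h0 - h)" .
    moreover have "dist h (w k) \<le> sqrt (real DIM(real^'s)) * infnorm (w k - h)"
      unfolding dist_norm using norm_le_infnorm[of "h - w k"] by (simp add: infnorm_sub)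
    ultimately have "dist h (w k) \<le> R"
      unfolding R_def by (meson mult_left_mono order_trans real_sqrt_ge_zero of_nat_0_le_iff)
    then show ?thesis
      by (simp add: K_def w_def)
  qed
  moreover have "continuous_on K (\<lambda>x. bellman P r x - x - g)"
    by (intro continuous_intros continuous_on_subset[OF continuous_on_bellman[OF mdp]]) auto
  moreover have "(\<lambda>k. bellman P r (w k) - w k - g) \<longlonglongrightarrow> 0"
  proof (rule tendsto_zero_if_infnorm_le)
    have "w k = y k + vec (- ((y k - h) $ s))" for k
      by (simp add: w_def vec_eq_iff)
    then have "bellman P r (w k) - w k = bellman P r (y k) - y k" for k
      by (simp only: bellman_residual_add_vec[OF mdp])
    then have residual_eq: "bellman P r (w k) - w k - g = bellman P r (y k) - g - y k" for k
      by (simp add: algebra_simps)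
    show "infnorm (bellman P r (w k) - w k - g) \<le> 8 / (real k + 1) * infnorm (h0 - h)" for k
      unfolding residual_eq y_def by (rule anchored_iter_residual_le)
    show "(\<lambda>k. 8 / (real k + 1) * infnorm (h0 - h)) \<longlonglongrightarrow> 0"
      by real_asymp
  qed
  moreover have "z = h" if "z \<in> K" and "bellman P r z - z - g = 0" for z
  proof (rule unichain_bellman_solution_eq[OF mdp assms(2,3)])
    show "bellman P r z = z + g"
      using that(2) by (simp add: algebra_simps)
    show "z $ s = h $ s"
      using that(1) by (simp add: K_def)
  qed
  ultimately have "w \<longlonglongrightarrow> h"
    by (rule compact_tendsto_unique_root[OF \<open>compact K\<close>])
  then show ?thesis
    unfolding w_def .
qed

lemma unichain_arvi_tendsto:
  fixes P :: "'s::finite \<Rightarrow> 'a::finite \<Rightarrow> 's \<Rightarrow> real"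
  assumes mdp: "mdp P" and "unichain P" and "mod_bellman P r (vec m) h"
    and "continuous_on UNIV f" and f_add_vec: "\<And>x c. f (x + vec c) = f x + c"
  shows "arvi P r f h0 \<longlonglongrightarrow> h + vec (m - f h)"
proof -
  let ?y = "anchored_iter (\<lambda>x. bellman P r x - vec m) h0"
  \<comment> \<open>ARVI is \<open>h\<^sup>k\<^sup>+\<^sup>1 = \<lambda>\<^sub>k h\<^sup>0 + (1 - \<lambda>\<^sub>k) \<nu> h\<^sup>k\<close>, and \<open>\<nu>\<close> ignores constant shifts.\<close>
  define \<nu> where "\<nu> x = bellman P r x - vec (f x)" for x
  have \<nu>_add_vec: "\<nu> (x + vec c) = \<nu> x" for x c
    by (simp add: \<nu>_def bellman_add_vec[OF mdp] f_add_vec vec_eq_iff)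
  fix s :: 's
  have "\<nu> (arvi P r f h0 k) = \<nu> (?y k - vec ((?y k - h) $ s))" for k
  proof -
    obtain c where "arvi P r f h0 k = ?y k + vec c"
      using arvi_eq_anchored_iter_add_vec[OF mdp] by blast
    moreover have "?y k - vec ((?y k - h) $ s) = ?y k + vec (- ((?y k - h) $ s))"
      by (simp add: vec_eq_iff)
    ultimately show ?thesis
      by (simp only: \<nu>_add_vec)
  qed
  moreover have "continuous_on UNIV \<nu>"
    unfolding \<nu>_def vec_def
    by (intro continuous_intros continuous_on_bellman[OF mdp] assms(4))
  then have "(\<lambda>k. \<nu> (?y k - vec ((?y k - h) $ s))) \<longlonglongrightarrow> \<nu> h"
    by (rule continuous_on_tendsto_compose[OF _ unichain_anchored_iter_tendsto[OF assms(1-3)]]) auto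
  moreover have "\<nu> h = h + vec (m - f h)"
    using mod_bellman_fixed_point[OF assms(3)] by (simp add: \<nu>_def vec_eq_iff)
  ultimately have \<nu>_lim: "(\<lambda>k. \<nu> (arvi P r f h0 k)) \<longlonglongrightarrow> h + vec (m - f h)"
    by simp
  have "(\<lambda>k. (2 / (real k + 2)) *\<^sub>R h0 + (1 - 2 / (real k + 2)) *\<^sub>R \<nu> (arvi P r f h0 k))
      \<longlonglongrightarrow> 0 *\<^sub>R h0 + (1 - 0) *\<^sub>R (h + vec (m - f h))"
  proof -
    have "(\<lambda>k. 2 / (real k + 2)) \<longlonglongrightarrow> 0"
      by real_asymp
    then show ?thesis
      by (intro tendsto_intros \<nu>_lim)
  qed
  then have "(\<lambda>k. arvi P r f h0 (Suc k)) \<longlonglongrightarrow> h + vec (m - f h)"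
    by (simp add: \<nu>_def)
  then show ?thesis
    by (rule LIMSEQ_imp_Suc)
qed

lemma unichain_arvi_offset_tendsto:
  fixes P :: "'s::finite \<Rightarrow> 'a::finite \<Rightarrow> 's \<Rightarrow> real"
  assumes "mdp P" and "unichain P" and "mod_bellman P r (vec m) h"
    and "continuous_on UNIV f" and "\<And>x c. f (x + vec c) = f x + c"
  shows "(\<lambda>k. vec (f (arvi P r f h0 k))) \<longlonglongrightarrow> vec m"
proof -
  have "(\<lambda>k. f (arvi P r f h0 k)) \<longlonglongrightarrow> f (h + vec (m - f h))"
    using continuous_on_tendsto_compose[OF assms(4) unichain_arvi_tendsto[OF assms]] by simp
  then show ?thesis
    using assms(5) by (auto intro!: vec_tendstoI)
qed

theorem theorem6:
  fixes P :: "'s::finite \<Rightarrow> 'a::finite \<Rightarrow> 's \<Rightarrow> real"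
    and r :: "'s \<Rightarrow> 'a \<Rightarrow> real"
    and gs hs h0 :: "real^'s"
    and f :: "real^'s \<Rightarrow> real"
  assumes "mdp P"
    and "weakly_communicating P"
    and "mod_bellman P r gs hs"
    and "continuous_on UNIV f"
    and "\<forall>x c. f (x + vec c) = f x + c"
  shows "(\<forall>k\<ge>1. \<forall>\<pi>. policy \<pi> \<and> bellman_pol P r \<pi> (arvi P r f h0 k) = bellman P r (arvi P r f h0 k) \<longrightarrow>
            infnorm (gs - gain P r \<pi>)
              \<le> infnorm (bellman P r (arvi P r f h0 k) - arvi P r f h0 k - gs)
          \<and> infnorm (bellman P r (arvi P r f h0 k) - arvi P r f h0 k - gs)
              \<le> 8 / (real k + 1) * infnorm (h0 - hs))
       \<and> (unichain P \<longrightarrow>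
          (\<exists>hinf. mod_bellman P r gs hinf \<and>
             (\<lambda>k. arvi P r f h0 k) \<longlonglongrightarrow> hinf \<and>
             (\<lambda>k. vec (f (arvi P r f h0 k))) \<longlonglongrightarrow> gs))"
proof -
  obtain m where gs: "gs = vec m"
    using mod_bellman_gain_const[OF assms(1-3)] by blast
  have mb: "mod_bellman P r (vec m) hs" and f_add_vec: "\<And>x c. f (x + vec c) = f x + c"
    using assms(3,5) gs by simp_all
  have "infnorm (gs - gain P r \<pi>) \<le> infnorm (bellman P r h - h - gs)"
    if "policy \<pi>" and "bellman_pol P r \<pi> h = bellman P r h" for \<pi> h
    using infnorm_gain_diff_le[OF assms(1) that(1), of m r h] that(2) by (simp add: gs)
  moreover have "infnorm (bellman P r (arvi P r f h0 k) - arvi P r f h0 k - gs)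
      \<le> 8 / (real k + 1) * infnorm (h0 - hs)" for k
    using infnorm_arvi_residual_le[OF assms(1) mb] by (simp add: gs)
  moreover have "mod_bellman P r gs (hs + vec (m - f hs))"
    by (rule mod_bellman_add_vec[OF assms(1,3)])
  moreover note unichain_arvi_tendsto[OF assms(1) _ mb assms(4) f_add_vec]
    unichain_arvi_offset_tendsto[OF assms(1) _ mb assms(4) f_add_vec]
  ultimately show ?thesis
    unfolding gs by blast
qed

end
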